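(* For all $C_1,\dots,C_4\in\mathcal H$ and $t_1,\dots,t_4\in\mathbb R$, $$F_4(t_1,C_1;t_2,C_2;t_3,C_3;t_4,C_4)=M+F_2(t_1,C_1;t_2,C_2)\,F_2(t_3,C_3;t_4,C_4),$$ where $M=\langle a^*(t_2,C_2)a^*(t_1,C_1)\Phi_0\,|\,a^*(t_3,C_3)a^*(t_4,C_4)\Phi_0\rangle$ is given explicitly by $$M=\int_0^\infty\!\!\int_0^\infty\overline{c_2(w_2)}c_4(w_2)\,\overline{c_1(w_1)}c_3(w_1)\exp\Big(i(t_4-t_2e^{-w_1/2})E(w_2)+it_3e^{-w_2/2}E(w_1)-it_1E(w_1)\Big)\mathrm dw_2\,\mathrm dw_1$$ $$\;+\int_0^\infty\!\!\int_0^\infty\overline{c_2(w_2)}c_3(w_2)\,\overline{c_1(w_1)}c_4(w_1)\exp\Big(i(t_3-t_2)e^{-w_1/2}E(w_2)+i(t_4-t_1)E(w_1)\Big)\mathrm dw_2\,\mathrm dw_1 .$$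
   Context: One-particle space: $\mathcal H=L^2((0,\infty),\mathrm dw)$, a vector $C_j$ being identified with its mode function $c_j(w)$. $\mathcal F_s(\mathcal H)$ is the symmetric Fock space with vacuum $\Phi_0$; $n$-particle vectors are symmetric functions $v(w_1,\dots,w_n)$. $H_0$ acts on the $n$-particle sector as multiplication by $w_1+\dots+w_n$; $E(x)=2-2e^{-x/2}$, $H=E(H_0)$, $U(t)=e^{-itH}$. Annihilation/creation operators: $(a(\overline C)v)(w_1,\dots,w_{n-1})=\sqrt n\int\overline{c(w)}v(w,w_1,\dots)\mathrm dw$, $(a^*(C)v)(w_1,\dots,w_{n+1})=(n+1)^{-1/2}\sum_j c(w_j)v(w_1,\dots,\widehat{w_j},\dots,w_{n+1})$. Heisenberg operators $a^*(t,C)=U(t)^{-1}a^*(C)U(t)$, $\Upsilon(C)=a(\overline C)+a^*(C)$, $\Upsilon(t,C)=U(t)^{-1}\Upsilon(C)U(t)$. The $n$-point functions are $F_n(t_1,C_1;\dots;t_n,C_n)=\langle\Phi_0|\Upsilon(t_1,C_1)\cdots\Upsilon(t_n,C_n)\Phi_0\rangle$; in particular $F_2(t_1,C_1;t_2,C_2)=\int_0^\infty e^{i(t_2-t_1)E(w)}\overline{c_1(w)}c_2(w)\mathrm dw$. *)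

theory Defs
  imports "HOL-Analysis.Analysis"
begin

(* Fock space vectors: component n is the n-particle function, evaluated on
   lists ws of length n (values on other lengths are irrelevant). *)
type_synonym fock = "nat \<Rightarrow> real list \<Rightarrow> complex"

definition in_H :: "(real \<Rightarrow> complex) \<Rightarrow> bool" where
  "in_H c \<longleftrightarrow> c \<in> borel_measurable lborel \<and>
     set_integrable lborel {0<..} (\<lambda>w. (cmod (c w))\<^sup>2)"

definition E :: "real \<Rightarrow> real" where
  "E x = 2 - 2 * exp (- x / 2)"

(* U(t) = exp(-i t E(H0)); on the n-particle sector multiplication by
   exp(-i t E(w1+...+wn)) *)
definition U :: "real \<Rightarrow> fock \<Rightarrow> fock" where
  "U t v = (\<lambda>n ws. exp (- \<i> * complex_of_real (t * E (sum_list ws))) * v n ws)"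

definition ann :: "(real \<Rightarrow> complex) \<Rightarrow> fock \<Rightarrow> fock" where
  "ann c v = (\<lambda>n ws. complex_of_real (sqrt (real (Suc n))) *
      (LINT w:{0<..}|lborel. cnj (c w) * v (Suc n) (w # ws)))"

definition cre :: "(real \<Rightarrow> complex) \<Rightarrow> fock \<Rightarrow> fock" where
  "cre c v = (\<lambda>n ws. case n of 0 \<Rightarrow> 0
     | Suc m \<Rightarrow> complex_of_real (1 / sqrt (real (Suc m))) *
         (\<Sum>j<Suc m. c (ws ! j) * v m (take j ws @ drop (Suc j) ws)))"

definition vac :: fock where
  "vac = (\<lambda>n ws. if n = 0 then 1 else 0)"

definition Ups :: "(real \<Rightarrow> complex) \<Rightarrow> fock \<Rightarrow> fock" where
  "Ups c v = (\<lambda>n ws. ann c v n ws + cre c v n ws)"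

(* Heisenberg operators; U(t)^{-1} = U(-t) *)
definition cre_t :: "real \<Rightarrow> (real \<Rightarrow> complex) \<Rightarrow> fock \<Rightarrow> fock" where
  "cre_t t c v = U (- t) (cre c (U t v))"

definition Ups_t :: "real \<Rightarrow> (real \<Rightarrow> complex) \<Rightarrow> fock \<Rightarrow> fock" where
  "Ups_t t c v = U (- t) (Ups c (U t v))"

fun nint :: "nat \<Rightarrow> (real list \<Rightarrow> complex) \<Rightarrow> complex" where
  "nint 0 f = f []"
| "nint (Suc n) f = (LINT w:{0<..}|lborel. nint n (\<lambda>ws. f (w # ws)))"

(* Fock inner product, antilinear in the first argument *)
definition fock_inner :: "fock \<Rightarrow> fock \<Rightarrow> complex" where
  "fock_inner \<psi> \<phi> = (\<Sum>n. nint n (\<lambda>ws. cnj (\<psi> n ws) * \<phi> n ws))"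

definition Fn :: "(real \<times> (real \<Rightarrow> complex)) list \<Rightarrow> complex" where
  "Fn ps = fock_inner vac (foldr (\<lambda>(t, c) v. Ups_t t c v) ps vac)"

end

theory Submission
  imports Defs
begin

(* Its
       symmetrisation is the product of the two pair states, giving the first
       claim; expanding F_4 = <Phi_0|Ups(t1)Ups(t2)Ups(t3)Ups(t4)Phi_0>, the
       two-particle intermediate sector gives the same double integral and the
       vacuum sector gives F_2 * F_2, giving the second. *)

section \<open>Lebesgue measure on the half-line\<close>

(* The one-particle space is L^2 of this measure. *)
definition halfline :: "real measure" where
  "halfline = restrict_space lborel {0<..}"

lemma set_integral_halfline:
  fixes f :: "real \<Rightarrow> 'b::{banach, second_countable_topology}"
  shows "(LINT x:{0<..}|lborel. f x) = (LINT x|halfline. f x)"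
  unfolding halfline_def set_lebesgue_integral_def
  by (subst integral_restrict_space) auto

lemma sigma_finite_halfline: "sigma_finite_measure halfline"
  unfolding halfline_def
  by (rule sigma_finite_measure_restrict_space) (auto intro: lborel.sigma_finite_measure_axioms)

interpretation halfline2: pair_sigma_finite halfline halfline
  by (simp add: pair_sigma_finite_def sigma_finite_halfline)

lemma borel_measurable_halfline:
  "f \<in> borel_measurable lborel \<Longrightarrow> f \<in> borel_measurable halfline"
  unfolding halfline_def by (rule measurable_restrict_space1) simp

lemma id_measurable_halfline [measurable]: "(\<lambda>x::real. x) \<in> borel_measurable halfline"
  by (rule borel_measurable_halfline) simp

lemma in_H_measurable: "in_H c \<Longrightarrow> c \<in> borel_measurable halfline"
  unfolding in_H_def by (auto intro: borel_measurable_halfline)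

lemma in_H_square_integrable: "in_H c \<Longrightarrow> integrable halfline (\<lambda>x. (cmod (c x))\<^sup>2)"
  unfolding in_H_def halfline_def set_integrable_def
  by (subst integrable_restrict_space) auto

lemma E_measurable [measurable]: "E \<in> borel_measurable borel"
  unfolding E_def by measurable

lemma E_0 [simp]: "E 0 = 0"
  unfolding E_def by simp

lemma E_add: "E (x + y) = E y + exp (- y / 2) * E x"
proof -
  have "exp (- (x + y) / 2) = exp (- y / 2) * exp (- x / 2)"
    by (simp add: exp_add[symmetric] field_simps)
  then show ?thesis
    unfolding E_def by (simp add: algebra_simps)
qed

lemma exp_i_diff:
  "exp (- (\<i> * complex_of_real a)) * exp (\<i> * complex_of_real b) = exp (\<i> * complex_of_real (b - a))"
  by (simp flip: exp_add add: algebra_simps)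

lemma cnj_exp_i: "cnj (exp (\<i> * complex_of_real a)) = exp (- (\<i> * complex_of_real a))"
  by (simp add: exp_cnj)

section \<open>Integrability and iterated integrals\<close>

lemma borel_measurable_cnj [measurable (raw)]:
  assumes "f \<in> borel_measurable M"
  shows "(\<lambda>x. cnj (f x)) \<in> borel_measurable M"
proof -
  have "cnj \<in> borel_measurable borel"
    by (rule borel_measurable_continuous_onI) (intro continuous_intros)
  then show ?thesis
    using measurable_compose[OF assms] by blast
qed

(* The pointwise product of two L^2 functions is L^1, by ab \<le> a^2 + b^2. *)
lemma integrable_norm_mult_L2:
  fixes f g :: "'a \<Rightarrow> 'b::real_normed_vector"
  assumes [measurable]: "f \<in> borel_measurable M" "g \<in> borel_measurable M"
    and "integrable M (\<lambda>x. (norm (f x))\<^sup>2)" "integrable M (\<lambda>x. (norm (g x))\<^sup>2)"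
  shows "integrable M (\<lambda>x. norm (f x) * norm (g x))"
proof (rule Bochner_Integration.integrable_bound)
  show "integrable M (\<lambda>x. (norm (f x))\<^sup>2 + (norm (g x))\<^sup>2)"
    using assms(3,4) by auto
  show "(\<lambda>x. norm (f x) * norm (g x)) \<in> borel_measurable M"
    by measurable
  have "a * b \<le> a\<^sup>2 + b\<^sup>2" if "a \<ge> 0" "b \<ge> 0" for a b :: real
    using sum_squares_bound[of a b] mult_nonneg_nonneg[OF that]
    by (simp add: power2_eq_square)
  then show "AE x in M. norm (norm (f x) * norm (g x)) \<le> norm ((norm (f x))\<^sup>2 + (norm (g x))\<^sup>2)"
    by (intro AE_I2) simp
qed

lemma in_H_integrable_mult:
  assumes "in_H c" "in_H d"
  shows "integrable halfline (\<lambda>x. cmod (c x) * cmod (d x))"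
  using assms by (intro integrable_norm_mult_L2 in_H_measurable in_H_square_integrable)

lemma (in pair_sigma_finite) integrable_tensor:
  fixes f :: "'a \<Rightarrow> real" and g :: "'b \<Rightarrow> real"
  assumes f: "integrable M1 f" and g: "integrable M2 g"
  shows "integrable (M1 \<Otimes>\<^sub>M M2) (\<lambda>(x, y). f x * g y)"
proof (rule Fubini_integrable)
  have [measurable]: "f \<in> borel_measurable M1" "g \<in> borel_measurable M2"
    using f g by auto
  show "(\<lambda>(x, y). f x * g y) \<in> borel_measurable (M1 \<Otimes>\<^sub>M M2)"
    by measurable
  have "integrable M1 (\<lambda>x. norm (f x) * (LINT y|M2. norm (g y)))"
    using f by (intro integrable_mult_left) auto
  then show "integrable M1 (\<lambda>x. LINT y|M2. norm (case (x, y) of (x, y) \<Rightarrow> f x * g y))"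
    by (simp add: abs_mult)
  show "AE x in M1. integrable M2 (\<lambda>y. case (x, y) of (x, y) \<Rightarrow> f x * g y)"
    using g by auto
qed

lemma (in pair_sigma_finite) integrable_dominated_tensor:
  fixes h :: "'a \<times> 'b \<Rightarrow> 'c::{banach, second_countable_topology}"
    and f :: "'a \<Rightarrow> real" and g :: "'b \<Rightarrow> real"
  assumes "h \<in> borel_measurable (M1 \<Otimes>\<^sub>M M2)" "integrable M1 f" "integrable M2 g"
    and "\<And>x y. norm (h (x, y)) \<le> f x * g y"
  shows "integrable (M1 \<Otimes>\<^sub>M M2) h"
proof (rule Bochner_Integration.integrable_bound)
  show "integrable (M1 \<Otimes>\<^sub>M M2) (\<lambda>(x, y). f x * g y)"
    using assms(2,3) by (rule integrable_tensor)
  show "AE p in M1 \<Otimes>\<^sub>M M2. norm (h p) \<le> norm ((\<lambda>(x, y). f x * g y) p)"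
    using assms(4) by (intro AE_I2) (auto split: prod.split intro: order_trans[OF _ abs_ge_self])
qed fact

lemma (in pair_sigma_finite) iterated_integral_add:
  fixes f g :: "'a \<Rightarrow> 'b \<Rightarrow> 'c::{banach, second_countable_topology}"
  assumes f: "integrable (M1 \<Otimes>\<^sub>M M2) (\<lambda>(x, y). f x y)"
      and g: "integrable (M1 \<Otimes>\<^sub>M M2) (\<lambda>(x, y). g x y)"
  shows "(LINT x|M1. LINT y|M2. f x y + g x y)
       = (LINT x|M1. LINT y|M2. f x y) + (LINT x|M1. LINT y|M2. g x y)"
proof -
  have fg: "integrable (M1 \<Otimes>\<^sub>M M2) (\<lambda>(x, y). f x y + g x y)"
    using Bochner_Integration.integrable_add[OF f g] by (simp add: split_beta')
  show ?thesis
    using integral_fst[OF f] integral_fst[OF g] integral_fst[OF fg]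
      Bochner_Integration.integral_add[OF f g] by (simp add: split_beta')
qed

(* Symmetrising an integrand in its two variables does not change its
   iterated integral; this identifies the inner product of two symmetric
   two-particle states with an unsymmetrised double integral. *)
lemma iterated_integral_symmetrise:
  fixes f :: "'a \<Rightarrow> 'a \<Rightarrow> complex"
  assumes "sigma_finite_measure M"
    and f: "integrable (M \<Otimes>\<^sub>M M) (\<lambda>(x, y). f x y)"
  shows "(LINT x|M. LINT y|M. (f x y + f y x) / 2) = (LINT x|M. LINT y|M. f x y)"
proof -
  interpret pair_sigma_finite M M
    using assms(1) by (simp add: pair_sigma_finite_def)
  have f_swap: "integrable (M \<Otimes>\<^sub>M M) (\<lambda>(x, y). f y x)"
    using integrable_product_swap[OF f] by simp
  have swap: "integral\<^sup>L (M \<Otimes>\<^sub>M M) (\<lambda>(x, y). f y x)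
      = integral\<^sup>L (M \<Otimes>\<^sub>M M) (\<lambda>(x, y). f x y)"
    using integral_product_swap[of "\<lambda>(x, y). f x y"] f by simp
  have "(LINT x|M. LINT y|M. (f x y + f y x) / 2)
      = ((LINT x|M. LINT y|M. f x y) + (LINT x|M. LINT y|M. f y x)) / 2"
    using iterated_integral_add[OF f f_swap] f f_swap
    by (simp add: add_divide_distrib[symmetric])
  also have "(LINT x|M. LINT y|M. f y x) = (LINT x|M. LINT y|M. f x y)"
    using integral_fst[OF f] integral_fst[OF f_swap] swap by (simp add: split_beta')
  finally show ?thesis by simp
qed

section \<open>Fock-space bookkeeping\<close>

lemma vac_apply: "vac n ws = (if n = 0 then 1 else 0)"
  unfolding vac_def by simp

lemma U_apply: "U t v n ws = exp (- \<i> * complex_of_real (t * E (sum_list ws))) * v n ws"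
  unfolding U_def by simp

lemma nint_zero: "nint n (\<lambda>_. 0) = 0"
  by (induction n) auto

lemma fock_inner_single_sector:
  assumes "\<And>n ws. n \<noteq> k \<Longrightarrow> \<psi> n ws = 0"
  shows "fock_inner \<psi> \<phi> = nint k (\<lambda>ws. cnj (\<psi> k ws) * \<phi> k ws)"
proof -
  have terms: "(\<lambda>n. nint n (\<lambda>ws. cnj (\<psi> n ws) * \<phi> n ws))
      = (\<lambda>n. if n = k then nint k (\<lambda>ws. cnj (\<psi> k ws) * \<phi> k ws) else 0)"
    using assms by (intro ext) (auto simp: nint_zero)
  have "(\<lambda>n. nint n (\<lambda>ws. cnj (\<psi> n ws) * \<phi> n ws)) sums nint k (\<lambda>ws. cnj (\<psi> k ws) * \<phi> k ws)"
    unfolding terms by (rule sums_single)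
  then show ?thesis
    unfolding fock_inner_def by (rule sums_unique[symmetric])
qed

lemma fock_inner_vac: "fock_inner vac \<phi> = \<phi> 0 []"
  by (subst fock_inner_single_sector[of 0]) (simp_all add: vac_apply)

lemma cre_t_single_sector:
  assumes "\<And>m ws. m \<noteq> k \<Longrightarrow> v m ws = 0" and "n \<noteq> Suc k"
  shows "cre_t t c v n ws = 0"
  using assms by (cases n) (simp_all add: cre_t_def cre_def U_apply)

lemma one_particle_sector: "n \<noteq> 1 \<Longrightarrow> cre_t t d vac n ws = 0"
  by (rule cre_t_single_sector[where k = 0]) (simp_all add: vac_apply)

lemma two_particle_sector: "n \<noteq> 2 \<Longrightarrow> cre_t s c (cre_t t d vac) n ws = 0"
  by (rule cre_t_single_sector[where k = 1]) (simp_all add: one_particle_sector)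

lemma Ups_t_apply:
  "Ups_t t c v n ws
     = exp (\<i> * complex_of_real (t * E (sum_list ws))) * ann c (U t v) n ws + cre_t t c v n ws"
  unfolding Ups_t_def Ups_def cre_t_def by (simp add: U_apply algebra_simps)

lemma Ups_t_vac: "Ups_t t c vac = cre_t t c vac"
  by (intro ext) (simp add: Ups_t_apply ann_def U_apply vac_apply)

lemma Ups_t_vacuum_component:
  "Ups_t t c v 0 [] = (LINT w|halfline. cnj (c w) * exp (- (\<i> * complex_of_real (t * E w))) * v 1 [w])"
  by (simp add: Ups_t_apply ann_def cre_t_def cre_def U_apply set_integral_halfline mult.assoc)

lemma Ups_t_one_particle_component:
  "Ups_t t c v 1 [w]
     = exp (\<i> * complex_of_real (t * E w)) * complex_of_real (sqrt 2) *
         (LINT y|halfline. cnj (c y) * exp (- (\<i> * complex_of_real (t * E (y + w)))) * v 2 [y, w])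
     + exp (\<i> * complex_of_real (t * E w)) * c w * v 0 []"
  by (simp add: Ups_t_apply ann_def cre_t_def cre_def U_apply set_integral_halfline
      numeral_2_eq_2 mult.assoc)

section \<open>One- and two-particle states\<close>

lemma one_particle_state: "cre_t t d vac 1 [x] = d x * exp (\<i> * complex_of_real (t * E x))"
  unfolding cre_t_def by (simp add: U_apply cre_def vac_apply mult.commute)

(* Unsymmetrised amplitude of a^*(s,C)a^*(t,D)Phi_0 at momenta (x,y): the
   particle created first carries momentum y, and by the cocycle identity
   the later evolution of the pair only damps its phase. *)
definition pair_amp ::
    "(real \<Rightarrow> complex) \<Rightarrow> (real \<Rightarrow> complex) \<Rightarrow> real \<Rightarrow> real \<Rightarrow> real \<Rightarrow> real \<Rightarrow> complex" where
  "pair_amp c d s t x y = c x * d y * exp (\<i> * complex_of_real (s * exp (- y / 2) * E x + t * E y))"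

lemma cre_t_two_particle_component:
  "cre_t s c v 2 [x, y] = exp (\<i> * complex_of_real (s * E (x + y))) * complex_of_real (1 / sqrt 2) *
     (c x * exp (- (\<i> * complex_of_real (s * E y))) * v 1 [y]
    + c y * exp (- (\<i> * complex_of_real (s * E x))) * v 1 [x])"
  by (simp add: cre_t_def cre_def U_apply numeral_2_eq_2)

lemma two_particle_state:
  "cre_t s c (cre_t t d vac) 2 [x, y]
     = complex_of_real (1 / sqrt 2) * (pair_amp c d s t x y + pair_amp c d s t y x)"
proof -
  have phase: "exp (\<i> * complex_of_real (s * E (x + y))) * exp (- (\<i> * complex_of_real (s * E y)))
        * exp (\<i> * complex_of_real (t * E y))
      = exp (\<i> * complex_of_real (s * exp (- y / 2) * E x + t * E y))" for x y
  proof -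
    have "\<i> * complex_of_real (s * E (x + y)) + - (\<i> * complex_of_real (s * E y))
          + \<i> * complex_of_real (t * E y)
        = \<i> * complex_of_real (s * exp (- y / 2) * E x + t * E y)"
      by (simp add: E_add algebra_simps)
    then show ?thesis
      by (simp flip: exp_add)
  qed
  have phase': "exp (\<i> * complex_of_real (s * E (x + y))) * exp (- (\<i> * complex_of_real (s * E x)))
        * exp (\<i> * complex_of_real (t * E x))
      = exp (\<i> * complex_of_real (s * exp (- x / 2) * E y + t * E x))"
    using phase[of y x] by (simp add: add.commute)
  show ?thesis
    unfolding cre_t_two_particle_component one_particle_state pair_amp_def
      phase[symmetric] phase'[symmetric]
    by (simp add: algebra_simps)
qed

lemma Ups_t_two_particle_component:
  "Ups_t s c (cre_t t d vac) 2 ws = cre_t s c (cre_t t d vac) 2 ws"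
  by (simp add: Ups_t_apply ann_def U_apply one_particle_sector)

lemma two_point_function:
  "Fn [(t1, c1), (t2, c2)]
     = (LINT w|halfline. cnj (c1 w) * c2 w * exp (\<i> * complex_of_real ((t2 - t1) * E w)))"
proof -
  have "Fn [(t1, c1), (t2, c2)] = Ups_t t1 c1 (cre_t t2 c2 vac) 0 []"
    by (simp add: Fn_def fock_inner_vac Ups_t_vac)
  also have "\<dots> = (LINT w|halfline. cnj (c1 w) * c2 w *
      (exp (- (\<i> * complex_of_real (t1 * E w))) * exp (\<i> * complex_of_real (t2 * E w))))"
    unfolding Ups_t_vacuum_component one_particle_state by (simp add: mult_ac)
  finally show ?thesis
    by (simp only: exp_i_diff left_diff_distrib)
qed

lemma integrable_phase_product:
  assumes "in_H c" "in_H d" and [measurable]: "\<phi> \<in> borel_measurable halfline"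
  shows "integrable halfline (\<lambda>w. cnj (c w) * d w * exp (\<i> * complex_of_real (\<phi> w)))"
proof (rule Bochner_Integration.integrable_bound)
  have [measurable]: "c \<in> borel_measurable halfline" "d \<in> borel_measurable halfline"
    using assms by (auto intro: in_H_measurable)
  show "integrable halfline (\<lambda>w. cmod (c w) * cmod (d w))"
    using assms(1,2) by (rule in_H_integrable_mult)
  show "(\<lambda>w. cnj (c w) * d w * exp (\<i> * complex_of_real (\<phi> w))) \<in> borel_measurable halfline"
    by measurable
  show "AE w in halfline. norm (cnj (c w) * d w * exp (\<i> * complex_of_real (\<phi> w)))
      \<le> norm (cmod (c w) * cmod (d w))"
    by (intro AE_I2) (simp add: norm_mult)
qed

section \<open>The two-particle kernel\<close>

(* Kernel whose double integral is M: the first pair state, unsymmetrised,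
   against the second pair state, symmetrised. *)
definition M_kernel ::
    "(real \<Rightarrow> complex) \<Rightarrow> (real \<Rightarrow> complex) \<Rightarrow> (real \<Rightarrow> complex) \<Rightarrow> (real \<Rightarrow> complex)
     \<Rightarrow> real \<Rightarrow> real \<Rightarrow> real \<Rightarrow> real \<Rightarrow> real \<Rightarrow> real \<Rightarrow> complex" where
  "M_kernel c1 c2 c3 c4 t1 t2 t3 t4 x y
     = cnj (pair_amp c2 c1 t2 t1 y x) * (pair_amp c3 c4 t3 t4 x y + pair_amp c3 c4 t3 t4 y x)"

(* Both products of a conjugated pair amplitude with a pair amplitude are
   dominated by tensor products of L^1 functions, hence integrable. *)
lemma pair_amp_products_integrable:
  assumes "in_H a" "in_H b" "in_H c" "in_H d"
  shows "integrable (halfline \<Otimes>\<^sub>M halfline) (\<lambda>(x, y). cnj (pair_amp a b s t y x) * pair_amp c d s' t' x y)"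
    and "integrable (halfline \<Otimes>\<^sub>M halfline) (\<lambda>(x, y). cnj (pair_amp a b s t y x) * pair_amp c d s' t' y x)"
proof -
  have [measurable]: "a \<in> borel_measurable halfline" "b \<in> borel_measurable halfline"
    "c \<in> borel_measurable halfline" "d \<in> borel_measurable halfline"
    using assms by (auto intro: in_H_measurable)
  show "integrable (halfline \<Otimes>\<^sub>M halfline) (\<lambda>(x, y). cnj (pair_amp a b s t y x) * pair_amp c d s' t' x y)"
    by (rule halfline2.integrable_dominated_tensor[where f = "\<lambda>x. cmod (b x) * cmod (c x)"
          and g = "\<lambda>y. cmod (a y) * cmod (d y)"])
      (auto simp: pair_amp_def norm_mult intro: in_H_integrable_mult assms)
  show "integrable (halfline \<Otimes>\<^sub>M halfline) (\<lambda>(x, y). cnj (pair_amp a b s t y x) * pair_amp c d s' t' y x)"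
    by (rule halfline2.integrable_dominated_tensor[where f = "\<lambda>x. cmod (b x) * cmod (d x)"
          and g = "\<lambda>y. cmod (a y) * cmod (c y)"])
      (auto simp: pair_amp_def norm_mult intro: in_H_integrable_mult assms)
qed

lemma M_kernel_integrable:
  assumes "in_H c1" "in_H c2" "in_H c3" "in_H c4"
  shows "integrable (halfline \<Otimes>\<^sub>M halfline) (\<lambda>(x, y). M_kernel c1 c2 c3 c4 t1 t2 t3 t4 x y)"
  using Bochner_Integration.integrable_add[OF pair_amp_products_integrable[OF assms(2,1,3,4)]]
  by (simp add: M_kernel_def split_beta' distrib_left)

lemma pair_amp_products:
  "cnj (pair_amp c2 c1 t2 t1 y x) * pair_amp c3 c4 t3 t4 x y
     = cnj (c2 y) * c4 y * cnj (c1 x) * c3 x *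
         exp (\<i> * complex_of_real ((t4 - t2 * exp (- x / 2)) * E y
                  + t3 * exp (- y / 2) * E x - t1 * E x))"
  "cnj (pair_amp c2 c1 t2 t1 y x) * pair_amp c3 c4 t3 t4 y x
     = cnj (c2 y) * c3 y * cnj (c1 x) * c4 x *
         exp (\<i> * complex_of_real ((t3 - t2) * exp (- x / 2) * E y + (t4 - t1) * E x))"
proof -
  have phase_direct:
    "exp (- (\<i> * complex_of_real (t2 * exp (- x / 2) * E y + t1 * E x)))
       * exp (\<i> * complex_of_real (t3 * exp (- y / 2) * E x + t4 * E y))
     = exp (\<i> * complex_of_real ((t4 - t2 * exp (- x / 2)) * E y
                  + t3 * exp (- y / 2) * E x - t1 * E x))"
    unfolding exp_i_diff by (simp add: algebra_simps)
  have phase_exchange: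
    "exp (- (\<i> * complex_of_real (t2 * exp (- x / 2) * E y + t1 * E x)))
       * exp (\<i> * complex_of_real (t3 * exp (- x / 2) * E y + t4 * E x))
     = exp (\<i> * complex_of_real ((t3 - t2) * exp (- x / 2) * E y + (t4 - t1) * E x))"
    unfolding exp_i_diff by (simp add: algebra_simps)
  show "cnj (pair_amp c2 c1 t2 t1 y x) * pair_amp c3 c4 t3 t4 x y
     = cnj (c2 y) * c4 y * cnj (c1 x) * c3 x *
         exp (\<i> * complex_of_real ((t4 - t2 * exp (- x / 2)) * E y
                  + t3 * exp (- y / 2) * E x - t1 * E x))"
    unfolding pair_amp_def complex_cnj_mult cnj_exp_i phase_direct[symmetric]
    by (simp add: algebra_simps)
  show "cnj (pair_amp c2 c1 t2 t1 y x) * pair_amp c3 c4 t3 t4 y x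
     = cnj (c2 y) * c3 y * cnj (c1 x) * c4 x *
         exp (\<i> * complex_of_real ((t3 - t2) * exp (- x / 2) * E y + (t4 - t1) * E x))"
    unfolding pair_amp_def complex_cnj_mult cnj_exp_i phase_exchange[symmetric]
    by (simp add: algebra_simps)
qed

lemma M_kernel_integral:
  assumes "in_H c1" "in_H c2" "in_H c3" "in_H c4"
  shows "(LINT x|halfline. LINT y|halfline. M_kernel c1 c2 c3 c4 t1 t2 t3 t4 x y) =
     (LINT w1:{0<..}|lborel. LINT w2:{0<..}|lborel.
        cnj (c2 w2) * c4 w2 * cnj (c1 w1) * c3 w1 *
        exp (\<i> * complex_of_real ((t4 - t2 * exp (- w1 / 2)) * E w2
                 + t3 * exp (- w2 / 2) * E w1 - t1 * E w1)))
   + (LINT w1:{0<..}|lborel. LINT w2:{0<..}|lborel.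
        cnj (c2 w2) * c3 w2 * cnj (c1 w1) * c4 w1 *
        exp (\<i> * complex_of_real ((t3 - t2) * exp (- w1 / 2) * E w2
                 + (t4 - t1) * E w1)))"
proof -
  have "(LINT x|halfline. LINT y|halfline. M_kernel c1 c2 c3 c4 t1 t2 t3 t4 x y)
      = (LINT x|halfline. LINT y|halfline. cnj (pair_amp c2 c1 t2 t1 y x) * pair_amp c3 c4 t3 t4 x y
          + cnj (pair_amp c2 c1 t2 t1 y x) * pair_amp c3 c4 t3 t4 y x)"
    by (simp add: M_kernel_def distrib_left)
  also have "\<dots> = (LINT x|halfline. LINT y|halfline. cnj (pair_amp c2 c1 t2 t1 y x) * pair_amp c3 c4 t3 t4 x y)
      + (LINT x|halfline. LINT y|halfline. cnj (pair_amp c2 c1 t2 t1 y x) * pair_amp c3 c4 t3 t4 y x)"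
    by (rule halfline2.iterated_integral_add) (intro pair_amp_products_integrable assms)+
  finally show ?thesis
    by (simp only: pair_amp_products set_integral_halfline)
qed

section \<open>The two-particle inner product and the four-point function\<close>

(* The inner product M of the two pair states is the kernel's double integral:
   the product of the two symmetrised amplitudes is the symmetrised kernel. *)
lemma pair_states_inner_product:
  assumes "in_H c1" "in_H c2" "in_H c3" "in_H c4"
  shows "fock_inner (cre_t t2 c2 (cre_t t1 c1 vac)) (cre_t t3 c3 (cre_t t4 c4 vac))
    = (LINT x|halfline. LINT y|halfline. M_kernel c1 c2 c3 c4 t1 t2 t3 t4 x y)"
proof -
  have half: "complex_of_real (1 / sqrt 2) * complex_of_real (1 / sqrt 2) = 1 / 2"
    by (simp flip: of_real_mult)
  have product: "cnj (cre_t t2 c2 (cre_t t1 c1 vac) 2 [x, y]) * cre_t t3 c3 (cre_t t4 c4 vac) 2 [x, y]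
      = (M_kernel c1 c2 c3 c4 t1 t2 t3 t4 x y + M_kernel c1 c2 c3 c4 t1 t2 t3 t4 y x) / 2" for x y
    using half unfolding M_kernel_def two_particle_state by (simp add: algebra_simps)
  have "fock_inner (cre_t t2 c2 (cre_t t1 c1 vac)) (cre_t t3 c3 (cre_t t4 c4 vac))
      = (LINT x|halfline. LINT y|halfline.
           cnj (cre_t t2 c2 (cre_t t1 c1 vac) 2 [x, y]) * cre_t t3 c3 (cre_t t4 c4 vac) 2 [x, y])"
    by (subst fock_inner_single_sector[of 2])
      (simp_all add: two_particle_sector numeral_2_eq_2 set_integral_halfline)
  also have "\<dots> = (LINT x|halfline. LINT y|halfline.
      (M_kernel c1 c2 c3 c4 t1 t2 t3 t4 x y + M_kernel c1 c2 c3 c4 t1 t2 t3 t4 y x) / 2)"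
    by (simp only: product)
  also have "\<dots> = (LINT x|halfline. LINT y|halfline. M_kernel c1 c2 c3 c4 t1 t2 t3 t4 x y)"
    by (rule iterated_integral_symmetrise[OF sigma_finite_halfline M_kernel_integrable[OF assms]])
  finally show ?thesis .
qed

(* Inside F_4, after Ups(t1,C1) has projected onto one particle of momentum w,
   Ups(t2,C2) either annihilates a particle of the pair state (giving the
   kernel) or creates one from its vacuum component (giving F_2 * F_2). *)
lemma four_point_integrand:
  fixes c3 c4 :: "real \<Rightarrow> complex" and t3 t4 :: real and Z :: fock
  defines "Z \<equiv> Ups_t t3 c3 (cre_t t4 c4 vac)"
  shows "cnj (c1 w) * exp (- (\<i> * complex_of_real (t1 * E w))) * Ups_t t2 c2 Z 1 [w]
    = (LINT y|halfline. M_kernel c1 c2 c3 c4 t1 t2 t3 t4 w y)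
      + cnj (c1 w) * c2 w * exp (\<i> * complex_of_real ((t2 - t1) * E w)) * Z 0 []"
proof -
  have Z_pair: "Z 2 [y, w] = complex_of_real (1 / sqrt 2) * (pair_amp c3 c4 t3 t4 y w + pair_amp c3 c4 t3 t4 w y)" for y
    unfolding Z_def Ups_t_two_particle_component two_particle_state ..
  have phase: "exp (- (\<i> * complex_of_real (t1 * E w))) * exp (\<i> * complex_of_real (t2 * E w))
      * exp (- (\<i> * complex_of_real (t2 * E (y + w))))
    = cnj (exp (\<i> * complex_of_real (t2 * exp (- w / 2) * E y + t1 * E w)))" for y
  proof -
    have "- (\<i> * complex_of_real (t1 * E w)) + \<i> * complex_of_real (t2 * E w)
          + - (\<i> * complex_of_real (t2 * E (y + w)))
        = - (\<i> * complex_of_real (t2 * exp (- w / 2) * E y + t1 * E w))"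
      unfolding E_add by (simp add: algebra_simps)
    then show ?thesis
      unfolding cnj_exp_i by (simp only: flip: exp_add)
  qed
  have root2: "complex_of_real (sqrt 2) * complex_of_real (1 / sqrt 2) = 1"
    by (simp flip: of_real_mult)
  have kernel: "cnj (c1 w) * exp (- (\<i> * complex_of_real (t1 * E w))) * exp (\<i> * complex_of_real (t2 * E w))
        * complex_of_real (sqrt 2) * (cnj (c2 y) * exp (- (\<i> * complex_of_real (t2 * E (y + w)))) * Z 2 [y, w])
      = M_kernel c1 c2 c3 c4 t1 t2 t3 t4 w y" for y
  proof -
    have "cnj (c1 w) * exp (- (\<i> * complex_of_real (t1 * E w))) * exp (\<i> * complex_of_real (t2 * E w))
        * complex_of_real (sqrt 2) * (cnj (c2 y) * exp (- (\<i> * complex_of_real (t2 * E (y + w)))) * Z 2 [y, w])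
      = cnj (c2 y) * cnj (c1 w)
        * (exp (- (\<i> * complex_of_real (t1 * E w))) * exp (\<i> * complex_of_real (t2 * E w))
           * exp (- (\<i> * complex_of_real (t2 * E (y + w)))))
        * (complex_of_real (sqrt 2) * complex_of_real (1 / sqrt 2))
        * (pair_amp c3 c4 t3 t4 y w + pair_amp c3 c4 t3 t4 w y)"
      unfolding Z_pair by (simp only: mult_ac)
    then show ?thesis
      unfolding phase root2 M_kernel_def pair_amp_def by (simp add: mult_ac add.commute)
  qed
  have exp_two_point: "exp (- (\<i> * complex_of_real (t1 * E w))) * exp (\<i> * complex_of_real (t2 * E w))
      = exp (\<i> * complex_of_real ((t2 - t1) * E w))"
    by (simp only: exp_i_diff left_diff_distrib)
  have annihilation: "cnj (c1 w) * exp (- (\<i> * complex_of_real (t1 * E w)))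
        * exp (\<i> * complex_of_real (t2 * E w)) * complex_of_real (sqrt 2)
        * (LINT y|halfline. cnj (c2 y) * exp (- (\<i> * complex_of_real (t2 * E (y + w)))) * Z 2 [y, w])
      = (LINT y|halfline. M_kernel c1 c2 c3 c4 t1 t2 t3 t4 w y)"
    by (simp only: integral_mult_right_zero[symmetric] kernel)
  have "cnj (c1 w) * exp (- (\<i> * complex_of_real (t1 * E w))) * Ups_t t2 c2 Z 1 [w]
      = cnj (c1 w) * exp (- (\<i> * complex_of_real (t1 * E w)))
          * exp (\<i> * complex_of_real (t2 * E w)) * complex_of_real (sqrt 2)
          * (LINT y|halfline. cnj (c2 y) * exp (- (\<i> * complex_of_real (t2 * E (y + w)))) * Z 2 [y, w])
        + cnj (c1 w) * c2 w
          * (exp (- (\<i> * complex_of_real (t1 * E w))) * exp (\<i> * complex_of_real (t2 * E w))) * Z 0 []"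
    unfolding Ups_t_one_particle_component
    by (simp add: algebra_simps del: integral_mult_right_zero integral_mult_left_zero)
  then show ?thesis
    by (simp only: annihilation exp_two_point)
qed

lemma four_point_function:
  assumes "in_H c1" "in_H c2" "in_H c3" "in_H c4"
  shows "Fn [(t1, c1), (t2, c2), (t3, c3), (t4, c4)]
    = (LINT x|halfline. LINT y|halfline. M_kernel c1 c2 c3 c4 t1 t2 t3 t4 x y)
      + Fn [(t1, c1), (t2, c2)] * Fn [(t3, c3), (t4, c4)]"
proof -
  define Z where "Z = Ups_t t3 c3 (cre_t t4 c4 vac)"
  define f12 where "f12 w = cnj (c1 w) * c2 w * exp (\<i> * complex_of_real ((t2 - t1) * E w))" for w
  have "Fn [(t1, c1), (t2, c2), (t3, c3), (t4, c4)] = Ups_t t1 c1 (Ups_t t2 c2 Z) 0 []"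
    by (simp add: Fn_def fock_inner_vac Ups_t_vac Z_def)
  also have "\<dots> = (LINT w|halfline. (LINT y|halfline. M_kernel c1 c2 c3 c4 t1 t2 t3 t4 w y) + f12 w * Z 0 [])"
    unfolding Ups_t_vacuum_component Z_def four_point_integrand f12_def ..
  also have "\<dots> = (LINT w|halfline. LINT y|halfline. M_kernel c1 c2 c3 c4 t1 t2 t3 t4 w y)
      + (LINT w|halfline. f12 w) * Z 0 []"
  proof (subst Bochner_Integration.integral_add)
    show "integrable halfline (\<lambda>w. LINT y|halfline. M_kernel c1 c2 c3 c4 t1 t2 t3 t4 w y)"
      using halfline2.integrable_fst[OF M_kernel_integrable[OF assms]] by simp
    show "integrable halfline (\<lambda>w. f12 w * Z 0 [])"
      unfolding f12_def by (intro integrable_mult_left integrable_phase_product assms) measurable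
  qed simp_all
  also have "Z 0 [] = Fn [(t3, c3), (t4, c4)]"
    by (simp add: Fn_def fock_inner_vac Ups_t_vac Z_def)
  finally show ?thesis
    unfolding f12_def two_point_function .
qed

theorem mainTheorem7:
  fixes c1 c2 c3 c4 :: "real \<Rightarrow> complex" and t1 t2 t3 t4 :: real
  assumes "in_H c1" "in_H c2" "in_H c3" "in_H c4"
  defines "M \<equiv>
     (LINT w1:{0<..}|lborel. LINT w2:{0<..}|lborel.
        cnj (c2 w2) * c4 w2 * cnj (c1 w1) * c3 w1 *
        exp (\<i> * complex_of_real ((t4 - t2 * exp (- w1 / 2)) * E w2
                 + t3 * exp (- w2 / 2) * E w1 - t1 * E w1)))
   + (LINT w1:{0<..}|lborel. LINT w2:{0<..}|lborel.
        cnj (c2 w2) * c3 w2 * cnj (c1 w1) * c4 w1 *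
        exp (\<i> * complex_of_real ((t3 - t2) * exp (- w1 / 2) * E w2
                 + (t4 - t1) * E w1)))"
  shows "fock_inner (cre_t t2 c2 (cre_t t1 c1 vac)) (cre_t t3 c3 (cre_t t4 c4 vac)) = M
    \<and> Fn [(t1, c1), (t2, c2), (t3, c3), (t4, c4)]
        = M + Fn [(t1, c1), (t2, c2)] * Fn [(t3, c3), (t4, c4)]"
proof -
  have kernel_M: "(LINT x|halfline. LINT y|halfline. M_kernel c1 c2 c3 c4 t1 t2 t3 t4 x y) = M"
    unfolding M_def by (rule M_kernel_integral[OF assms(1-4)])
  show ?thesis
    using pair_states_inner_product[OF assms(1-4)] four_point_function[OF assms(1-4)] kernel_M
    by simp
qed

end
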